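(* Let $\mathcal{A} \in \{\text{GS}, \text{DFS}, \text{LDFS}, \text{MCS}, \text{MNS}\}$ and let $v$ be a vertex of a finite, simple, undirected, connected graph $G$ with at least two vertices. The following are equivalent: (i) $v$ is the $\mathcal{L}$-root leaf of some $\mathcal{A}$-ordering of $G$; (ii) $v$ is an $\mathcal{L}$-leaf of some $\mathcal{A}$-ordering of $G$; (iii) $v$ is not a cut vertex of $G$.
   Context: A vertex ordering of $G$ is a bijection $\sigma:\{1,\dots,n\}\to V(G)$; $u \prec_\sigma w$ means $u$ comes before $w$. Searches are defined by the following label search: initially every vertex has label $\emptyset$; for $i=1,\dots,n$, choose any unnumbered vertex $x$ such that there is no unnumbered $y$ with $\mathrm{label}(x) \prec_{\mathcal{A}} \mathrm{label}(y)$, set $\sigma(i)=x$, and add $i$ to the labels of all unnumbered neighbors of $x$. The orderings produced are the $\mathcal{A}$-orderings. The strict partial orders on finite subsets of positive integers are: GS: $A \prec B$ iff $A=\emptyset$ and $B\neq\emptyset$. DFS: $A \prec B$ iff ($A=\emptyset$, $B\neq\emptyset$) or $\max(A)<\max(B)$. LDFS: $A \prec B$ iff $A\subsetneq B$ or $\max(A\setminus B)<\max(B\setminus A)$. MCS: $A\prec B$ iff $|A|<|B|$. MNS: $A \prec B$ iff $A \subsetneq B$. For a GS ordering $\sigma$ of connected $G$, the $\mathcal{L}$-tree of $\sigma$ is the spanning tree containing, for each vertex $v\neq\sigma(1)$, the edge from $v$ to its rightmost neighbor $w$ with $w\prec_\sigma v$. A vertex is an $\mathcal{L}$-leaf of $\sigma$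 if it is a leaf of the $\mathcal{L}$-tree; it is the $\mathcal{L}$-root leaf if additionally it equals $\sigma(1)$. *)

theory Defs
  imports Main
begin

definition simple_graph :: "'a set \<Rightarrow> ('a \<Rightarrow> 'a \<Rightarrow> bool) \<Rightarrow> bool" where
  "simple_graph V E \<longleftrightarrow> finite V \<and> (\<forall>x y. E x y \<longrightarrow> E y x) \<and> (\<forall>x. \<not> E x x)
     \<and> (\<forall>x y. E x y \<longrightarrow> x \<in> V \<and> y \<in> V)"

definition connected_graph :: "'a set \<Rightarrow> ('a \<Rightarrow> 'a \<Rightarrow> bool) \<Rightarrow> bool" where
  "connected_graph V E \<longleftrightarrow>
     (\<forall>x\<in>V. \<forall>y\<in>V. (\<lambda>a b. E a b \<and> a \<in> V \<and> b \<in> V)\<^sup>*\<^sup>* x y)"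

definition cut_vertex :: "'a set \<Rightarrow> ('a \<Rightarrow> 'a \<Rightarrow> bool) \<Rightarrow> 'a \<Rightarrow> bool" where
  "cut_vertex V E v \<longleftrightarrow> v \<in> V \<and> \<not> connected_graph (V - {v}) (\<lambda>a b. E a b \<and> a \<noteq> v \<and> b \<noteq> v)"

datatype search = GS | DFS | LDFS | MCS | MNS

fun label_prec :: "search \<Rightarrow> nat set \<Rightarrow> nat set \<Rightarrow> bool" where
  "label_prec GS A B \<longleftrightarrow> A = {} \<and> B \<noteq> {}"
| "label_prec DFS A B \<longleftrightarrow> (A = {} \<and> B \<noteq> {}) \<or> (A \<noteq> {} \<and> B \<noteq> {} \<and> Max A < Max B)"
| "label_prec LDFS A B \<longleftrightarrow> A \<subset> B \<or>
      (A - B \<noteq> {} \<and> B - A \<noteq> {} \<and> Max (A - B) < Max (B - A))"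
| "label_prec MCS A B \<longleftrightarrow> card A < card B"
| "label_prec MNS A B \<longleftrightarrow> A \<subset> B"

text \<open>Orderings are lists; sigma(i) = sigma ! (i-1). At step i (1-based), the label of an
  unnumbered vertex x is the set of numbers j < i with sigma(j) adjacent to x.\<close>
definition search_label :: "('a \<Rightarrow> 'a \<Rightarrow> bool) \<Rightarrow> 'a list \<Rightarrow> nat \<Rightarrow> 'a \<Rightarrow> nat set" where
  "search_label E \<sigma> i x = {j. 1 \<le> j \<and> j < i \<and> E (\<sigma> ! (j - 1)) x}"

definition is_search_ordering ::
  "search \<Rightarrow> 'a set \<Rightarrow> ('a \<Rightarrow> 'a \<Rightarrow> bool) \<Rightarrow> 'a list \<Rightarrow> bool" where
  "is_search_ordering S V E \<sigma> \<longleftrightarrow> distinct \<sigma> \<and> set \<sigma> = V \<and>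
     (\<forall>i\<in>{1..length \<sigma>}. \<forall>y \<in> set (drop i \<sigma>).
        \<not> label_prec S (search_label E \<sigma> i (\<sigma> ! (i - 1))) (search_label E \<sigma> i y))"

definition pos :: "'a list \<Rightarrow> 'a \<Rightarrow> nat" where
  "pos \<sigma> w = (LEAST j. j < length \<sigma> \<and> \<sigma> ! j = w)"

definition L_parent :: "('a \<Rightarrow> 'a \<Rightarrow> bool) \<Rightarrow> 'a list \<Rightarrow> 'a \<Rightarrow> 'a" where
  "L_parent E \<sigma> w = \<sigma> ! (Max {j. j < pos \<sigma> w \<and> E (\<sigma> ! j) w})"

definition L_tree_edges :: "('a \<Rightarrow> 'a \<Rightarrow> bool) \<Rightarrow> 'a list \<Rightarrow> 'a set set" where
  "L_tree_edges E \<sigma> = {{w, L_parent E \<sigma> w} | w. w \<in> set \<sigma> \<and> w \<noteq> hd \<sigma>}"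

definition L_leaf :: "('a \<Rightarrow> 'a \<Rightarrow> bool) \<Rightarrow> 'a list \<Rightarrow> 'a \<Rightarrow> bool" where
  "L_leaf E \<sigma> v \<longleftrightarrow> v \<in> set \<sigma> \<and> card {e \<in> L_tree_edges E \<sigma>. v \<in> e} = 1"

definition L_root_leaf :: "('a \<Rightarrow> 'a \<Rightarrow> bool) \<Rightarrow> 'a list \<Rightarrow> 'a \<Rightarrow> bool" where
  "L_root_leaf E \<sigma> v \<longleftrightarrow> L_leaf E \<sigma> v \<and> v = hd \<sigma>"

end

theory Submission
  imports Defs
begin

text \<open>
  (ii) \<open>\<Longrightarrow>\<close> (iii): every vertex other than the first has an earlier neighbour, so the
  \<open>\<L>\<close>-parent of a vertex always precedes it. Following \<open>\<L>\<close>-parents from any vertex of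
  \<open>G - v\<close> therefore ends, inside \<open>G - v\<close>, at the root or at an \<open>\<L>\<close>-child of \<open>v\<close>.
  If \<open>v\<close> is an \<open>\<L>\<close>-leaf there is exactly one such endpoint (a non-root leaf has no
  children, the root leaf has one), so \<open>G - v\<close> is connected.

  (iii) \<open>\<Longrightarrow>\<close> (i): start the search with \<open>v\<close> and a neighbour \<open>u\<close>, and from then on
  always number a vertex adjacent to some numbered vertex other than \<open>v\<close>; this is possible
  because \<open>G - v\<close> is connected. Among these candidates pick one whose label is maximal for
  \<open>\<prec>\<^sub>\<A>\<close>; no other vertex can have a larger label, since the others have labels
  contained in \<open>{1}\<close>. In the resulting \<open>\<L>\<close>-tree, \<open>u\<close> is the only child of \<open>v\<close>.
\<close>

section \<open>Label orders\<close>

lemma not_label_prec_subset: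
  assumes "finite A" "B \<subseteq> A"
  shows "\<not> label_prec S A B"
  using assms by (cases S) (auto simp: card_mono leD dest: Max_mono)

lemma label_prec_empty: "finite B \<Longrightarrow> B \<noteq> {} \<Longrightarrow> label_prec S {} B"
  by (cases S) auto

lemma not_label_prec_singleton_below:
  assumes "finite A" "a \<in> A" "B \<subseteq> {b}" "b < a"
  shows "\<not> label_prec S A B"
proof (cases S)
  case GS
  then show ?thesis using assms(2) by auto
next
  case DFS
  have "B = {} \<or> B = {b}" using assms(3) by auto
  then show ?thesis using DFS Max_ge[OF assms(1,2)] assms(2,4) by auto
next
  case LDFS
  have "a \<notin> B" using assms(3,4) by auto
  then have "\<not> A \<subset> B" using assms(2) by auto
  moreover have "Max (B - A) < Max (A - B)" if "B - A \<noteq> {}"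
  proof -
    have "B - A = {b}" using that assms(3) by auto
    moreover have "a \<le> Max (A - B)" using assms(1,2) \<open>a \<notin> B\<close> by (intro Max_ge) auto
    ultimately show ?thesis using assms(4) by simp
  qed
  ultimately show ?thesis using LDFS by (metis label_prec.simps(3) less_asym)
next
  case MCS
  have "card B \<le> 1" using card_mono[OF _ assms(3)] by simp
  moreover have "card A \<ge> 1" using assms(1,2) by (auto simp: Suc_le_eq card_gt_0_iff)
  ultimately show ?thesis using MCS by simp
next
  case MNS
  then show ?thesis using assms by auto
qed

text \<open>Each label order embeds into \<open><\<close> on \<open>nat\<close>; for LDFS a label is read as a binary numeral.\<close>

fun label_rank :: "search \<Rightarrow> nat set \<Rightarrow> nat" where
  "label_rank DFS A = (if A = {} then 0 else Suc (Max A))"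
| "label_rank LDFS A = (\<Sum>j\<in>A. 2 ^ j)"
| "label_rank _ A = card A"

lemma sum_pow2_less:
  assumes "C \<subseteq> {..<m}"
  shows "(\<Sum>j\<in>C. (2::nat) ^ j) < 2 ^ m"
proof -
  have "(\<Sum>j\<in>C. (2::nat) ^ j) \<le> (\<Sum>j\<in>{0..<m}. 2 ^ j)"
    using assms by (intro sum_mono2) auto
  also have "\<dots> = 2 ^ m - 1" by (rule sum_power2)
  also have "\<dots> < 2 ^ m" by simp
  finally show ?thesis .
qed

lemma sum_pow2_less_if_label_prec_LDFS:
  assumes "finite A" "finite B" "label_prec LDFS A B"
  shows "(\<Sum>j\<in>A. (2::nat) ^ j) < (\<Sum>j\<in>B. 2 ^ j)"
proof (cases "A \<subset> B")
  case True
  then have "(\<Sum>j\<in>B. (2::nat) ^ j) = (\<Sum>j\<in>B - A. 2 ^ j) + (\<Sum>j\<in>A. 2 ^ j)"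
    using assms(2) by (intro sum.subset_diff) auto
  moreover have "(\<Sum>j\<in>B - A. (2::nat) ^ j) > 0"
    using True assms(2) by (intro sum_pos) auto
  ultimately show ?thesis by simp
next
  case False
  define m where "m = Max (B - A)"
  have lex: "A - B \<noteq> {}" "B - A \<noteq> {}" "Max (A - B) < m"
    using assms False by (auto simp: m_def)
  have m: "m \<in> B - A" unfolding m_def using lex(2) assms(2) by (intro Max_in) auto
  have below: "A - B \<subseteq> {..<m}" using lex assms(1) by (auto dest: Max_ge[rotated])
  have "(\<Sum>j\<in>A. (2::nat) ^ j) = (\<Sum>j\<in>A \<inter> B. 2 ^ j) + (\<Sum>j\<in>A - B. 2 ^ j)"
    using assms(1) by (rule sum.Int_Diff)
  also have "\<dots> < (\<Sum>j\<in>A \<inter> B. 2 ^ j) + 2 ^ m"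
    using sum_pow2_less[OF below] by simp
  also have "\<dots> \<le> (\<Sum>j\<in>B \<inter> A. 2 ^ j) + (\<Sum>j\<in>B - A. 2 ^ j)"
    using m assms(2) by (simp add: Int_commute member_le_sum)
  also have "\<dots> = (\<Sum>j\<in>B. 2 ^ j)"
    using assms(2) by (rule sum.Int_Diff[symmetric])
  finally show ?thesis .
qed

lemma label_prec_rank_less:
  assumes "finite A" "finite B" "label_prec S A B"
  shows "label_rank S A < label_rank S B"
proof (cases S)
  case DFS
  then show ?thesis using assms by (auto simp del: Max_less_iff)
next
  case LDFS
  then show ?thesis using assms sum_pow2_less_if_label_prec_LDFS by simp
qed (use assms in \<open>auto simp: card_gt_0_iff psubset_card_mono\<close>)

lemma exists_label_prec_maximal:
  assumes "finite C" "C \<noteq> {}" "\<And>y. finite (L y)"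
  shows "\<exists>x\<in>C. \<forall>y\<in>C. \<not> label_prec S (L x) (L y)"
proof -
  define r where "r y = label_rank S (L y)" for y
  have "Max (r ` C) \<in> r ` C" using assms(1,2) by (intro Max_in) auto
  then obtain x where x: "x \<in> C" "r x = Max (r ` C)" by auto
  then have "r y \<le> r x" if "y \<in> C" for y
    using assms(1) that by simp
  then show ?thesis
    using x(1) label_prec_rank_less assms(3) by (metis leD r_def)
qed

section \<open>Connectivity\<close>

abbreviation reachable_in :: "('a \<Rightarrow> 'a \<Rightarrow> bool) \<Rightarrow> 'a set \<Rightarrow> 'a \<Rightarrow> 'a \<Rightarrow> bool" where
  "reachable_in E W \<equiv> (\<lambda>a b. E a b \<and> a \<in> W \<and> b \<in> W)\<^sup>*\<^sup>*"

lemma rtranclp_exits_set: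
  "R\<^sup>*\<^sup>* a b \<Longrightarrow> a \<in> A \<Longrightarrow> b \<notin> A \<Longrightarrow> \<exists>x y. R x y \<and> x \<in> A \<and> y \<notin> A"
  by (induction rule: rtranclp_induct) auto

lemma simple_graph_symp: "simple_graph V E \<Longrightarrow> symp E"
  by (auto simp: simple_graph_def symp_def)

lemma connected_graphI_hub:
  assumes "symp E" "\<And>x. x \<in> W \<Longrightarrow> reachable_in E W x t"
  shows "connected_graph W E"
proof -
  have "symp (reachable_in E W)"
    using assms(1) by (intro symp_rtranclp) (auto simp: symp_def)
  then show ?thesis
    using assms(2) unfolding connected_graph_def by (meson rtranclp_trans sympD)
qed

lemma cut_vertex_iff_disconnected:
  "cut_vertex V E v \<longleftrightarrow> v \<in> V \<and> \<not> connected_graph (V - {v}) E"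
proof -
  have "(\<lambda>a b. (E a b \<and> a \<noteq> v \<and> b \<noteq> v) \<and> a \<in> V - {v} \<and> b \<in> V - {v})
      = (\<lambda>a b. E a b \<and> a \<in> V - {v} \<and> b \<in> V - {v})"
    by auto
  then show ?thesis by (simp only: cut_vertex_def connected_graph_def)
qed

section \<open>Search orderings and their \<open>\<L>\<close>-trees\<close>

lemma finite_search_label: "finite (search_label E \<sigma> i x)"
  unfolding search_label_def by (rule finite_subset[of _ "{..<i}"]) auto

lemma search_label_append:
  "i \<le> Suc (length \<tau>) \<Longrightarrow> search_label E (\<tau> @ \<rho>) i x = search_label E \<tau> i x"
  unfolding search_label_def by (auto simp: nth_append)

lemma nth_in_set_take_iff:
  "distinct xs \<Longrightarrow> k < length xs \<Longrightarrow> xs ! k \<in> set (take m xs) \<longleftrightarrow> k < m"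
  by (auto simp: in_set_conv_nth nth_eq_iff_index_eq)

text \<open>Every label order puts \<open>{}\<close> below all nonempty labels, so a search never numbers a
  vertex without numbered neighbours while another unnumbered vertex has one.\<close>

lemma exists_earlier_neighbour:
  assumes so: "is_search_ordering S V E \<sigma>" and cg: "connected_graph V E"
    and k: "0 < k" "k < length \<sigma>"
  shows "\<exists>j<k. E (\<sigma> ! j) (\<sigma> ! k)"
proof -
  have d: "distinct \<sigma>" and sV: "set \<sigma> = V" using so by (auto simp: is_search_ordering_def)
  let ?P = "set (take k \<sigma>)"
  have "\<sigma> ! 0 \<in> V" "\<sigma> ! k \<in> V" using sV k by (auto intro!: nth_mem)
  then have "reachable_in E V (\<sigma> ! 0) (\<sigma> ! k)"
    using cg unfolding connected_graph_def by blast
  moreover have "\<sigma> \<noteq> []" using k by auto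
  then have "\<sigma> ! 0 \<in> ?P" "\<sigma> ! k \<notin> ?P"
    using nth_in_set_take_iff[OF d, of 0 k] nth_in_set_take_iff[OF d, of k k] k by simp_all
  ultimately obtain x y where xy: "E x y" "x \<in> ?P" "y \<notin> ?P" "y \<in> V"
    using rtranclp_exits_set[of _ "\<sigma> ! 0" "\<sigma> ! k" ?P] by blast
  obtain j where j: "j < k" "x = \<sigma> ! j" using xy(2) k by (auto simp: in_set_conv_nth)
  show ?thesis
  proof (cases "y = \<sigma> ! k")
    case True
    then show ?thesis using j xy(1) by blast
  next
    case False
    obtain i where i: "i < length \<sigma>" "y = \<sigma> ! i" using xy(4) sV by (auto simp: in_set_conv_nth)
    then have "k < i" using xy(3) False nth_in_set_take_iff[OF d] by (metis linorder_neqE_nat)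
    then have "y \<in> set (drop (Suc k) \<sigma>)"
      using i by (auto simp: in_set_conv_nth intro!: exI[of _ "i - Suc k"])
    then have "\<not> label_prec S (search_label E \<sigma> (Suc k) (\<sigma> ! k)) (search_label E \<sigma> (Suc k) y)"
      using so k unfolding is_search_ordering_def by fastforce
    moreover have "Suc j \<in> search_label E \<sigma> (Suc k) y"
      using j xy(1) by (simp add: search_label_def)
    ultimately have "search_label E \<sigma> (Suc k) (\<sigma> ! k) \<noteq> {}"
      by (metis label_prec_empty finite_search_label empty_iff)
    then obtain i where "i \<in> search_label E \<sigma> (Suc k) (\<sigma> ! k)" by blast
    then show ?thesis by (auto simp: search_label_def intro!: exI[of _ "i - 1"])
  qed
qed

lemma pos_nth: "distinct \<sigma> \<Longrightarrow> k < length \<sigma> \<Longrightarrow> pos \<sigma> (\<sigma> ! k) = k"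
  unfolding pos_def by (rule Least_equality) (auto simp: nth_eq_iff_index_eq)

lemma L_parent_nth:
  assumes "distinct \<sigma>" "k < length \<sigma>" "j < k" "E (\<sigma> ! j) (\<sigma> ! k)"
  shows "\<exists>m. L_parent E \<sigma> (\<sigma> ! k) = \<sigma> ! m \<and> j \<le> m \<and> m < k \<and> E (\<sigma> ! m) (\<sigma> ! k)"
proof -
  let ?J = "{i. i < k \<and> E (\<sigma> ! i) (\<sigma> ! k)}"
  have J: "finite ?J" "j \<in> ?J" using assms(3,4) by auto
  have "Max ?J \<in> ?J" by (rule Max_in) (use J in auto)
  moreover have "j \<le> Max ?J" by (rule Max_ge) (use J in auto)
  moreover have "L_parent E \<sigma> (\<sigma> ! k) = \<sigma> ! Max ?J"
    unfolding L_parent_def using pos_nth[OF assms(1,2)] by simp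
  ultimately show ?thesis by auto
qed

lemma L_parent_precedes:
  assumes so: "is_search_ordering S V E \<sigma>" and cg: "connected_graph V E"
    and w: "w \<in> set \<sigma>" "w \<noteq> hd \<sigma>"
  shows "L_parent E \<sigma> w \<in> set \<sigma> \<and> pos \<sigma> (L_parent E \<sigma> w) < pos \<sigma> w \<and> E (L_parent E \<sigma> w) w"
proof -
  have d: "distinct \<sigma>" using so by (simp add: is_search_ordering_def)
  obtain k where k: "k < length \<sigma>" "w = \<sigma> ! k" using w(1) by (auto simp: in_set_conv_nth)
  have "\<sigma> \<noteq> []" using k by auto
  then have "k \<noteq> 0" using k w(2) by (cases "k = 0") (auto simp: hd_conv_nth)
  then obtain j where "j < k" "E (\<sigma> ! j) (\<sigma> ! k)"
    using exists_earlier_neighbour[OF so cg] k(1) by blast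
  then obtain m where "L_parent E \<sigma> w = \<sigma> ! m" "m < k" "E (\<sigma> ! m) w"
    using L_parent_nth[OF d k(1)] k(2) by blast
  then show ?thesis using pos_nth[OF d] k by auto
qed

lemma L_tree_edge_parent:
  "w \<in> set \<sigma> \<Longrightarrow> w \<noteq> hd \<sigma> \<Longrightarrow> {w, L_parent E \<sigma> w} \<in> L_tree_edges E \<sigma>"
  unfolding L_tree_edges_def by blast

lemma L_leaf_unique_tree_neighbour:
  assumes "L_leaf E \<sigma> v" "{v, a} \<in> L_tree_edges E \<sigma>" "{v, b} \<in> L_tree_edges E \<sigma>"
  shows "a = b"
proof -
  have "card {e \<in> L_tree_edges E \<sigma>. v \<in> e} = 1" using assms(1) by (simp add: L_leaf_def)
  then obtain e where e: "{e \<in> L_tree_edges E \<sigma>. v \<in> e} = {e}" by (rule card_1_singletonE)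
  have "{v, a} \<in> {e \<in> L_tree_edges E \<sigma>. v \<in> e}" "{v, b} \<in> {e \<in> L_tree_edges E \<sigma>. v \<in> e}"
    using assms(2,3) by simp_all
  then have "{v, a} = {v, b}" unfolding e by simp
  then show ?thesis by (auto simp: doubleton_eq_iff)
qed

lemma L_leaf_unique_L_child:
  assumes "L_leaf E \<sigma> v"
    and "w\<^sub>1 \<in> set \<sigma>" "w\<^sub>1 \<noteq> hd \<sigma>" "L_parent E \<sigma> w\<^sub>1 = v"
    and "w\<^sub>2 \<in> set \<sigma>" "w\<^sub>2 \<noteq> hd \<sigma>" "L_parent E \<sigma> w\<^sub>2 = v"
  shows "w\<^sub>1 = w\<^sub>2"
proof -
  have "{w\<^sub>1, L_parent E \<sigma> w\<^sub>1} \<in> L_tree_edges E \<sigma>" "{w\<^sub>2, L_parent E \<sigma> w\<^sub>2} \<in> L_tree_edges E \<sigma>"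
    using assms(2,3,5,6) by (simp_all add: L_tree_edge_parent)
  then have "{v, w\<^sub>1} \<in> L_tree_edges E \<sigma>" "{v, w\<^sub>2} \<in> L_tree_edges E \<sigma>"
    using assms(4,7) by (simp_all add: insert_commute)
  then show ?thesis by (rule L_leaf_unique_tree_neighbour[OF assms(1)])
qed

section \<open>\<open>\<L>\<close>-leaves are not cut vertices\<close>

lemma nonroot_L_leaf_no_L_child:
  assumes so: "is_search_ordering S V E \<sigma>" and cg: "connected_graph V E"
    and v: "L_leaf E \<sigma> v" "v \<noteq> hd \<sigma>" and w: "w \<in> set \<sigma>" "w \<noteq> hd \<sigma>"
  shows "L_parent E \<sigma> w \<noteq> v"
proof
  assume wv: "L_parent E \<sigma> w = v"
  have vs: "v \<in> set \<sigma>" using v(1) by (simp add: L_leaf_def)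
  have "{v, w} \<in> L_tree_edges E \<sigma>"
    using L_tree_edge_parent[OF w, of E] wv by (simp add: insert_commute)
  moreover have "{v, L_parent E \<sigma> v} \<in> L_tree_edges E \<sigma>"
    using L_tree_edge_parent[OF vs v(2)] .
  ultimately have "w = L_parent E \<sigma> v" by (rule L_leaf_unique_tree_neighbour[OF v(1)])
  then have "pos \<sigma> w < pos \<sigma> v" using L_parent_precedes[OF so cg vs v(2)] by simp
  moreover have "pos \<sigma> v < pos \<sigma> w" using L_parent_precedes[OF so cg w] wv by simp
  ultimately show False by simp
qed

lemma reaches_hd_or_L_child:
  assumes so: "is_search_ordering S V E \<sigma>" and cg: "connected_graph V E" and "symp E"
    and "x \<in> V - {v}"
  shows "\<exists>z \<in> V - {v}. reachable_in E (V - {v}) x z \<and> (z = hd \<sigma> \<or> L_parent E \<sigma> z = v)"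
  using assms(4)
proof (induction "pos \<sigma> x" arbitrary: x rule: less_induct)
  case less
  show ?case
  proof (cases "x = hd \<sigma> \<or> L_parent E \<sigma> x = v")
    case True
    then show ?thesis using less.prems by blast
  next
    case False
    let ?p = "L_parent E \<sigma> x"
    have sV: "set \<sigma> = V" using so by (simp add: is_search_ordering_def)
    have p: "?p \<in> set \<sigma>" "pos \<sigma> ?p < pos \<sigma> x" "E ?p x"
      using L_parent_precedes[OF so cg] less.prems False sV by auto
    have pV: "?p \<in> V - {v}" using p(1) False sV by auto
    obtain z where z: "z \<in> V - {v}" "reachable_in E (V - {v}) ?p z" "z = hd \<sigma> \<or> L_parent E \<sigma> z = v"
      using less.hyps[OF p(2) pV] by blast
    have "E x ?p" using \<open>symp E\<close> p(3) by (meson sympD)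
    then have "reachable_in E (V - {v}) x ?p" using less.prems pV by (intro r_into_rtranclp) auto
    then have "reachable_in E (V - {v}) x z" using z(2) by (rule rtranclp_trans)
    then show ?thesis using z(1,3) by blast
  qed
qed

lemma L_leaf_not_cut_vertex:
  assumes so: "is_search_ordering S V E \<sigma>" and sg: "simple_graph V E"
    and cg: "connected_graph V E" and leaf: "L_leaf E \<sigma> v"
  shows "connected_graph (V - {v}) E"
proof -
  have sV: "set \<sigma> = V" using so by (simp add: is_search_ordering_def)
  define hub where "hub z \<longleftrightarrow> z \<in> V - {v} \<and> (z = hd \<sigma> \<or> L_parent E \<sigma> z = v)" for z
  have unique: "z\<^sub>1 = z\<^sub>2" if z: "hub z\<^sub>1" "hub z\<^sub>2" for z\<^sub>1 z\<^sub>2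
  proof (cases "v = hd \<sigma>")
    case True
    then have "z\<^sub>1 \<noteq> hd \<sigma>" "L_parent E \<sigma> z\<^sub>1 = v" "z\<^sub>1 \<in> set \<sigma>"
      and "z\<^sub>2 \<noteq> hd \<sigma>" "L_parent E \<sigma> z\<^sub>2 = v" "z\<^sub>2 \<in> set \<sigma>"
      using z sV unfolding hub_def by auto
    then show ?thesis using L_leaf_unique_L_child[OF leaf] by blast
  next
    case False
    have "z = hd \<sigma>" if "hub z" for z
    proof (rule ccontr)
      assume "z \<noteq> hd \<sigma>"
      moreover have "z \<in> set \<sigma>" "L_parent E \<sigma> z = v"
        using \<open>hub z\<close> \<open>z \<noteq> hd \<sigma>\<close> sV unfolding hub_def by auto
      ultimately show False using nonroot_L_leaf_no_L_child[OF so cg leaf False] by blast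
    qed
    then have "z\<^sub>1 = hd \<sigma>" "z\<^sub>2 = hd \<sigma>" using z by blast+
    then show ?thesis by simp
  qed
  have reach: "\<exists>z. hub z \<and> reachable_in E (V - {v}) x z" if "x \<in> V - {v}" for x
    using reaches_hd_or_L_child[OF so cg simple_graph_symp[OF sg] that] unfolding hub_def by blast
  show ?thesis
  proof (cases "V - {v} = {}")
    case True
    then show ?thesis unfolding connected_graph_def by blast
  next
    case False
    then obtain t where t: "hub t" using reach by blast
    have "reachable_in E (V - {v}) x t" if x: "x \<in> V - {v}" for x
    proof -
      obtain z where "hub z" "reachable_in E (V - {v}) x z" using reach[OF x] by blast
      then show ?thesis using unique[OF _ t] by simp
    qed
    then show ?thesis by (rule connected_graphI_hub[OF simple_graph_symp[OF sg]])
  qed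
qed

section \<open>Searches with a prescribed root leaf\<close>

text \<open>In a search prefix the label of the numbered vertex is compared with all vertices that are
  still unnumbered, including those that the prefix leaves out altogether.\<close>

definition search_prefix :: "search \<Rightarrow> 'a set \<Rightarrow> ('a \<Rightarrow> 'a \<Rightarrow> bool) \<Rightarrow> 'a list \<Rightarrow> bool" where
  "search_prefix S V E \<tau> \<longleftrightarrow> distinct \<tau> \<and> set \<tau> \<subseteq> V \<and>
     (\<forall>i\<in>{1..length \<tau>}. \<forall>y\<in>V - set (take i \<tau>).
        \<not> label_prec S (search_label E \<tau> i (\<tau> ! (i - 1))) (search_label E \<tau> i y))"

lemma search_prefix_Nil: "search_prefix S V E []"
  by (simp add: search_prefix_def)

lemma search_prefix_snoc:
  assumes pre: "search_prefix S V E \<tau>" and x: "x \<in> V - set \<tau>"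
    and greatest: "\<forall>y\<in>V - set \<tau>. \<not> label_prec S
       (search_label E \<tau> (Suc (length \<tau>)) x) (search_label E \<tau> (Suc (length \<tau>)) y)"
  shows "search_prefix S V E (\<tau> @ [x])"
  unfolding search_prefix_def
proof (intro conjI ballI)
  show "distinct (\<tau> @ [x])" "set (\<tau> @ [x]) \<subseteq> V"
    using pre x by (auto simp: search_prefix_def)
  fix i y
  assume i: "i \<in> {1..length (\<tau> @ [x])}" and y: "y \<in> V - set (take i (\<tau> @ [x]))"
  have lab: "search_label E (\<tau> @ [x]) i z = search_label E \<tau> i z" for z
    using i by (intro search_label_append) auto
  show "\<not> label_prec S (search_label E (\<tau> @ [x]) i ((\<tau> @ [x]) ! (i - 1)))
          (search_label E (\<tau> @ [x]) i y)"
  proof (cases "i \<le> length \<tau>")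
    case True
    then have "i \<in> {1..length \<tau>}" "y \<in> V - set (take i \<tau>)" "(\<tau> @ [x]) ! (i - 1) = \<tau> ! (i - 1)"
      using i y by (auto simp: nth_append)
    then show ?thesis using pre lab unfolding search_prefix_def by auto
  next
    case False
    then have "i = Suc (length \<tau>)" using i by auto
    then show ?thesis using greatest y lab by auto
  qed
qed

lemma is_search_ordering_if_search_prefix:
  assumes "search_prefix S V E \<sigma>" "set \<sigma> = V"
  shows "is_search_ordering S V E \<sigma>"
proof -
  have "distinct \<sigma>" using assms(1) by (simp add: search_prefix_def)
  then have "y \<in> V - set (take i \<sigma>)" if "y \<in> set (drop i \<sigma>)" for i y
    using that assms(2) set_take_disj_set_drop_if_distinct[of \<sigma> i i] by (auto dest: in_set_dropD)
  then show ?thesis using assms unfolding search_prefix_def is_search_ordering_def by blast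
qed

definition nonroot_earlier_neighbours :: "('a \<Rightarrow> 'a \<Rightarrow> bool) \<Rightarrow> 'a list \<Rightarrow> bool" where
  "nonroot_earlier_neighbours E \<tau> \<longleftrightarrow> (\<forall>k\<in>{2..<length \<tau>}. \<exists>j\<in>{1..<k}. E (\<tau> ! j) (\<tau> ! k))"

lemma L_parent_eq_hd_iff:
  assumes so: "is_search_ordering S V E \<sigma>" and cg: "connected_graph V E"
    and nonroot: "nonroot_earlier_neighbours E \<sigma>" and w: "w \<in> set \<sigma>" "w \<noteq> hd \<sigma>"
  shows "L_parent E \<sigma> w = hd \<sigma> \<longleftrightarrow> w = \<sigma> ! 1"
proof -
  have d: "distinct \<sigma>" using so by (simp add: is_search_ordering_def)
  have ne: "\<sigma> \<noteq> []" using w(1) by auto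
  then have hd: "hd \<sigma> = \<sigma> ! 0" by (simp add: hd_conv_nth)
  obtain k where k: "k < length \<sigma>" "w = \<sigma> ! k" using w(1) by (auto simp: in_set_conv_nth)
  then have k0: "k \<noteq> 0" using w(2) hd by (cases "k = 0") auto
  show ?thesis
  proof (cases "k = 1")
    case True
    obtain j where "j < k" "E (\<sigma> ! j) (\<sigma> ! k)"
      using exists_earlier_neighbour[OF so cg] k(1) k0 by blast
    then obtain m where "L_parent E \<sigma> w = \<sigma> ! m" "m < k"
      using L_parent_nth[of \<sigma> k j E, OF d k(1)] k(2) by blast
    then show ?thesis using True k(2) hd by simp
  next
    case False
    then have "k \<in> {2..<length \<sigma>}" using k(1) k0 by auto
    then obtain j where "j \<in> {1..<k}" "E (\<sigma> ! j) (\<sigma> ! k)"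
      using nonroot unfolding nonroot_earlier_neighbours_def by blast
    then obtain m where m: "L_parent E \<sigma> w = \<sigma> ! m" "1 \<le> m" "m < k"
      using L_parent_nth[of \<sigma> k j E, OF d k(1)] k(2) by fastforce
    then have "L_parent E \<sigma> w \<noteq> hd \<sigma>"
      using hd k(1) ne nth_eq_iff_index_eq[OF d, of m 0] by simp
    moreover have "w \<noteq> \<sigma> ! 1" using False k m nth_eq_iff_index_eq[OF d, of k 1] by simp
    ultimately show ?thesis by simp
  qed
qed

lemma L_root_leaf_hd:
  assumes so: "is_search_ordering S V E \<sigma>" and cg: "connected_graph V E"
    and len: "2 \<le> length \<sigma>" and nonroot: "nonroot_earlier_neighbours E \<sigma>"
  shows "L_root_leaf E \<sigma> (hd \<sigma>)"
proof -
  have d: "distinct \<sigma>" using so by (simp add: is_search_ordering_def)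
  have ne: "\<sigma> \<noteq> []" using len by auto
  have one: "\<sigma> ! 1 \<in> set \<sigma>" "\<sigma> ! 1 \<noteq> hd \<sigma>"
    using len ne nth_eq_iff_index_eq[OF d, of 1 0] by (auto simp: hd_conv_nth)
  have "{w \<in> set \<sigma>. w \<noteq> hd \<sigma> \<and> L_parent E \<sigma> w = hd \<sigma>} = {\<sigma> ! 1}"
    using one by (auto simp: L_parent_eq_hd_iff[OF so cg nonroot])
  moreover have "{e \<in> L_tree_edges E \<sigma>. hd \<sigma> \<in> e}
      = (\<lambda>w. {w, L_parent E \<sigma> w}) ` {w \<in> set \<sigma>. w \<noteq> hd \<sigma> \<and> L_parent E \<sigma> w = hd \<sigma>}"
    unfolding L_tree_edges_def by auto
  ultimately have "{e \<in> L_tree_edges E \<sigma>. hd \<sigma> \<in> e} = {{\<sigma> ! 1, L_parent E \<sigma> (\<sigma> ! 1)}}"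
    by simp
  then show ?thesis using one ne unfolding L_root_leaf_def L_leaf_def by simp
qed

lemma exists_unnumbered_nonroot_neighbour:
  assumes cg: "connected_graph (V - {\<tau> ! 0}) E" and d: "distinct \<tau>" and "set \<tau> \<subseteq> V"
    and "2 \<le> length \<tau>" and "set \<tau> \<noteq> V"
  shows "\<exists>y\<in>V - set \<tau>. \<exists>j\<in>{1..<length \<tau>}. E (\<tau> ! j) y"
proof -
  obtain b where b: "b \<in> V" "b \<notin> set \<tau>" using assms by auto
  have in_\<tau>: "\<tau> ! 0 \<in> set \<tau>" "\<tau> ! 1 \<in> set \<tau>" using assms(4) by (auto intro!: nth_mem)
  moreover have "\<tau> \<noteq> []" using assms(4) by auto
  then have "\<tau> ! 1 \<noteq> \<tau> ! 0" using nth_eq_iff_index_eq[OF d, of 1 0] assms(4) by auto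
  ultimately have "\<tau> ! 1 \<in> V - {\<tau> ! 0}" "b \<in> V - {\<tau> ! 0}" using assms(3) b by auto
  then obtain x y where xy: "E x y" "x \<in> V - {\<tau> ! 0}" "y \<in> V" "x \<in> set \<tau>" "y \<notin> set \<tau>"
    using cg b in_\<tau>(2) rtranclp_exits_set[of _ "\<tau> ! 1" b "set \<tau>"] unfolding connected_graph_def
    by blast
  then obtain j where j: "j < length \<tau>" "x = \<tau> ! j" "j \<noteq> 0" by (auto simp: in_set_conv_nth)
  then have "j \<in> {1..<length \<tau>}" by simp
  then show ?thesis using xy j(2) by blast
qed

lemma search_prefix_extend:
  assumes "finite V" and cg: "connected_graph (V - {\<tau> ! 0}) E"
    and pre: "search_prefix S V E \<tau>" and nonroot: "nonroot_earlier_neighbours E \<tau>"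
    and len: "2 \<le> length \<tau>" and "set \<tau> \<noteq> V"
  shows "\<exists>x. search_prefix S V E (\<tau> @ [x]) \<and> nonroot_earlier_neighbours E (\<tau> @ [x])"
proof -
  define n where "n = length \<tau>"
  define L where "L y = search_label E \<tau> (Suc n) y" for y
  define C where "C = {y \<in> V - set \<tau>. \<exists>j\<in>{1..<n}. E (\<tau> ! j) y}"
  have d: "distinct \<tau>" and sub: "set \<tau> \<subseteq> V" using pre by (simp_all add: search_prefix_def)
  have "C \<noteq> {}"
    using exists_unnumbered_nonroot_neighbour[OF cg d sub len assms(6)] unfolding C_def n_def by blast
  moreover have "finite C" using assms(1) by (simp add: C_def)
  moreover have "finite (L y)" for y by (simp add: L_def finite_search_label)
  ultimately obtain x where x: "x \<in> C" "\<forall>y\<in>C. \<not> label_prec S (L x) (L y)"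
    using exists_label_prec_maximal[of C L S] by blast
  then obtain j where j: "1 \<le> j" "j < n" "E (\<tau> ! j) x" by (auto simp: C_def)
  then have "Suc j \<in> L x" by (simp add: L_def search_label_def)
  text \<open>Restricting the choice to \<open>C\<close> is legal: a label inside \<open>{1}\<close> never dominates one
    containing a larger number.\<close>
  have greatest: "\<not> label_prec S (L x) (L y)" if y: "y \<in> V - set \<tau>" for y
  proof (cases "y \<in> C")
    case True
    then show ?thesis using x(2) by blast
  next
    case False
    have "L y \<subseteq> {1}"
    proof
      fix i assume "i \<in> L y"
      then have i: "1 \<le> i" "i - 1 < n" "E (\<tau> ! (i - 1)) y" by (auto simp: L_def search_label_def)
      show "i \<in> {1}"
      proof (rule ccontr)
        assume "i \<notin> {1}"
        then have "i - 1 \<in> {1..<n}" using i(1,2) by auto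
        then show False using False y i(3) unfolding C_def by blast
      qed
    qed
    moreover have "1 < Suc j" using j(1) by simp
    ultimately show ?thesis
      using not_label_prec_singleton_below[OF _ \<open>Suc j \<in> L x\<close>] by (simp add: L_def finite_search_label)
  qed
  have "x \<in> V - set \<tau>" using x(1) by (simp add: C_def)
  then have "search_prefix S V E (\<tau> @ [x])"
    using search_prefix_snoc[OF pre] greatest by (simp add: L_def n_def)
  moreover have "nonroot_earlier_neighbours E (\<tau> @ [x])"
    unfolding nonroot_earlier_neighbours_def
  proof
    fix k assume k: "k \<in> {2..<length (\<tau> @ [x])}"
    show "\<exists>i\<in>{1..<k}. E ((\<tau> @ [x]) ! i) ((\<tau> @ [x]) ! k)"
    proof (cases "k < n")
      case True
      then have "k \<in> {2..<length \<tau>}" using k by (simp add: n_def)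
      then obtain i where "i \<in> {1..<k}" "E (\<tau> ! i) (\<tau> ! k)"
        using nonroot unfolding nonroot_earlier_neighbours_def by blast
      then show ?thesis using True by (auto simp: nth_append n_def)
    next
      case False
      then have "k = n" using k by (simp add: n_def)
      then show ?thesis using j by (auto simp: nth_append n_def)
    qed
  qed
  ultimately show ?thesis by blast
qed

lemma search_prefix_start:
  assumes "v \<in> V" "u \<in> V" "u \<noteq> v" "E v u"
  shows "search_prefix S V E [v, u]"
proof -
  have "search_label E [] 1 y = {}" for y by (auto simp: search_label_def)
  then have "search_prefix S V E [v]"
    using search_prefix_snoc[OF search_prefix_Nil, of v] assms(1) by (simp add: not_label_prec_subset)
  moreover have "\<not> label_prec S (search_label E [v] (Suc (length [v])) u)
      (search_label E [v] (Suc (length [v])) y)" for y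
    by (rule not_label_prec_subset[OF finite_search_label]) (use assms(4) in \<open>auto simp: search_label_def\<close>)
  ultimately show ?thesis using search_prefix_snoc[of S V E "[v]" u] assms(2,3) by simp
qed

lemma exists_search_prefix_of_length:
  assumes "finite V" and cgv: "connected_graph (V - {v}) E" and start: "search_prefix S V E [v, u]"
    and "2 \<le> n" "n \<le> card V"
  shows "\<exists>\<tau>. length \<tau> = n \<and> \<tau> ! 0 = v \<and> search_prefix S V E \<tau> \<and> nonroot_earlier_neighbours E \<tau>"
  using assms(4,5)
proof (induction n rule: nat_induct_at_least)
  case base
  show ?case using start by (intro exI[of _ "[v, u]"]) (simp add: nonroot_earlier_neighbours_def)
next
  case (Suc n)
  then obtain \<tau> where \<tau>: "length \<tau> = n" "\<tau> ! 0 = v" "search_prefix S V E \<tau>"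
      "nonroot_earlier_neighbours E \<tau>"
    by auto
  have "card (set \<tau>) = n" using \<tau>(1,3) by (simp add: search_prefix_def distinct_card)
  then have "set \<tau> \<noteq> V" using Suc.prems by auto
  then obtain x where "search_prefix S V E (\<tau> @ [x])" "nonroot_earlier_neighbours E (\<tau> @ [x])"
    using search_prefix_extend[OF assms(1) _ \<tau>(3,4)] cgv \<tau>(1,2) Suc.hyps by auto
  moreover have "(\<tau> @ [x]) ! 0 = v" using \<tau>(1,2) Suc.hyps by (simp add: nth_append)
  moreover have "length (\<tau> @ [x]) = Suc n" using \<tau>(1) by simp
  ultimately show ?case by blast
qed

lemma exists_search_ordering_with_root_leaf:
  assumes sg: "simple_graph V E" and cg: "connected_graph V E" and card: "2 \<le> card V"
    and v: "v \<in> V" and cgv: "connected_graph (V - {v}) E"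
  shows "\<exists>\<sigma>. is_search_ordering S V E \<sigma> \<and> L_root_leaf E \<sigma> v"
proof -
  have finV: "finite V" using sg by (simp add: simple_graph_def)
  have "card (V - {v}) \<noteq> 0" using card v by (simp add: card_Diff_singleton)
  then obtain b where b: "b \<in> V" "b \<noteq> v" by (metis Diff_iff card.empty ex_in_conv insertI1)
  obtain u where u: "E v u" "u \<in> V"
    using cg v b rtranclp_exits_set[of _ v b "{v}"] unfolding connected_graph_def by blast
  have "u \<noteq> v" using sg u(1) by (auto simp: simple_graph_def)
  then have start: "search_prefix S V E [v, u]" using search_prefix_start v u by metis
  obtain \<sigma> where \<sigma>: "length \<sigma> = card V" "\<sigma> ! 0 = v" "search_prefix S V E \<sigma>"
      "nonroot_earlier_neighbours E \<sigma>"
    using exists_search_prefix_of_length[OF finV cgv start card]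
    by blast
  have "set \<sigma> = V"
    using \<sigma>(1,3) finV by (metis card_subset_eq distinct_card search_prefix_def)
  with \<sigma>(3) have so: "is_search_ordering S V E \<sigma>" by (rule is_search_ordering_if_search_prefix)
  have "\<sigma> \<noteq> []" using \<sigma>(1) card by auto
  then have "hd \<sigma> = v" using \<sigma>(2) by (simp add: hd_conv_nth)
  then show ?thesis using L_root_leaf_hd[OF so cg _ \<sigma>(4)] so \<sigma>(1) card by auto
qed

theorem theorem2:
  fixes S :: search and V :: "'a set" and E :: "'a \<Rightarrow> 'a \<Rightarrow> bool" and v :: 'a
  assumes "simple_graph V E" and "connected_graph V E" and "card V \<ge> 2" and "v \<in> V"
  shows "((\<exists>\<sigma>. is_search_ordering S V E \<sigma> \<and> L_root_leaf E \<sigma> v)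
            \<longleftrightarrow> (\<exists>\<sigma>. is_search_ordering S V E \<sigma> \<and> L_leaf E \<sigma> v))
       \<and> ((\<exists>\<sigma>. is_search_ordering S V E \<sigma> \<and> L_leaf E \<sigma> v) \<longleftrightarrow> \<not> cut_vertex V E v)"
proof -
  have "(\<exists>\<sigma>. is_search_ordering S V E \<sigma> \<and> L_root_leaf E \<sigma> v)
      \<Longrightarrow> (\<exists>\<sigma>. is_search_ordering S V E \<sigma> \<and> L_leaf E \<sigma> v)"
    by (auto simp: L_root_leaf_def)
  moreover have "(\<exists>\<sigma>. is_search_ordering S V E \<sigma> \<and> L_leaf E \<sigma> v) \<Longrightarrow> \<not> cut_vertex V E v"
    using L_leaf_not_cut_vertex[OF _ assms(1,2)] by (auto simp: cut_vertex_iff_disconnected)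
  moreover have "\<not> cut_vertex V E v \<Longrightarrow> (\<exists>\<sigma>. is_search_ordering S V E \<sigma> \<and> L_root_leaf E \<sigma> v)"
    using exists_search_ordering_with_root_leaf[OF assms] assms(4)
    by (auto simp: cut_vertex_iff_disconnected)
  ultimately show ?thesis by blast
qed

end
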